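(* Let $L,n$ be positive integers and $B\in\mathcal M(L,n)$. Then for all $1\le i\le L-1$ and $1\le j\le n-1$, \[e_i^{\downarrow}(e_j^{\leftarrow}(B))=e_j^{\leftarrow}(e_i^{\downarrow}(B)).\]
   Context: $\mathcal M(L,n)$ is the set of tuples $B=(B_1,\dots,B_L)$ of subsets of $[n]$, viewed as $L\times n$ grids with rows $1..L$ bottom to top and columns $1..n$ left to right, a ball in $(r,j)$ iff $j\in B_r$. $\mathrm{cw}(B)$ scans columns left to right, each top to bottom, recording row numbers of balls. For a word $w$ and $i\ge1$, $\mathrm{Par}_i(w)$ writes "(" for each letter $i+1$ and ")" for each letter $i$, left to right, and iteratively matches a "(" with a ")" to its right when adjacent or separated only by matched parentheses. $e_i^\star(B)$ moves every ball of row $i+1$ whose letter in $\mathrm{cw}(B)$ is unmatched in $\mathrm{Par}_i(\mathrm{cw}(B))$ down to row $i$ in the same column. The rotation $\mathrm{rot}:\mathcal M(L,n)\to\mathcal M(n,L)$ is the $90^\circ$ counterclockwise rotation: the ball in cell $(r,c)$ (row $r$, column $c$) goes to cell $(c,L+1-r)$. Define $e_i^{\downarrow}=e_i^\star$ on $\mathcal M(L,n)$ and $e_j^{\leftarrow}=\mathrm{rot}^{-1}\circ e_j^\star\circ\mathrm{rot}$ (with $e_j^\star$ acting on $\mathcal M(n,L)$). *)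

theory Defs
  imports Main
begin

text \<open>An element of M(L,n) is represented by its set of ball positions:
  a set of cells (r, c) with 1 \<le> r \<le> L (row) and 1 \<le> c \<le> n (column);
  (r, c) is a ball iff c \<in> B_r.\<close>

definition mats :: "nat \<Rightarrow> nat \<Rightarrow> (nat \<times> nat) set set" where
  "mats L n = {B. B \<subseteq> {1..L} \<times> {1..n}}"

text \<open>Column word, remembering the cell of each letter: columns left to right,
  each column top to bottom (rows L down to 1). The letter is the row (fst).\<close>

definition cw :: "nat \<Rightarrow> nat \<Rightarrow> (nat \<times> nat) set \<Rightarrow> (nat \<times> nat) list" where
  "cw L n B = concat (map (\<lambda>c. filter (\<lambda>x. x \<in> B) (map (\<lambda>r. (r, c)) (rev [1..<L+1]))) [1..<n+1])"

text \<open>Bracket matching for Par_i: letter i+1 is "(", letter i is ")".\<close>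

fun par_scan :: "nat \<Rightarrow> nat list \<Rightarrow> nat \<Rightarrow> nat list \<Rightarrow> nat list" where
  "par_scan i [] k st = st"
| "par_scan i (x # w) k st =
     (if x = i + 1 then par_scan i w (Suc k) (k # st)
      else if x = i then par_scan i w (Suc k) (tl st)
      else par_scan i w (Suc k) st)"

definition unmatched_open :: "nat \<Rightarrow> nat list \<Rightarrow> nat set" where
  "unmatched_open i w = set (par_scan i w 0 [])"

definition e_star :: "nat \<Rightarrow> nat \<Rightarrow> nat \<Rightarrow> (nat \<times> nat) set \<Rightarrow> (nat \<times> nat) set" where
  "e_star L n i B =
     (let ws = cw L n B;
          U = (\<lambda>k. ws ! k) ` unmatched_open i (map fst ws)
      in (B - U) \<union> (\<lambda>(r, c). (i, c)) ` U)"

definition rot :: "nat \<Rightarrow> (nat \<times> nat) set \<Rightarrow> (nat \<times> nat) set" where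
  "rot L B = (\<lambda>(r, c). (c, L + 1 - r)) ` B"

definition rot_inv :: "nat \<Rightarrow> (nat \<times> nat) set \<Rightarrow> (nat \<times> nat) set" where
  "rot_inv L B = (\<lambda>(r, c). (L + 1 - c, r)) ` B"

definition e_down :: "nat \<Rightarrow> nat \<Rightarrow> nat \<Rightarrow> (nat \<times> nat) set \<Rightarrow> (nat \<times> nat) set" where
  "e_down L n i B = e_star L n i B"

definition e_left :: "nat \<Rightarrow> nat \<Rightarrow> nat \<Rightarrow> (nat \<times> nat) set \<Rightarrow> (nat \<times> nat) set" where
  "e_left L n j B = rot_inv L (e_star n L j (rot L B))"

end

theory Submission
  imports Defs
begin

text \<open>
  Only the letters i and i+1 of the column word matter, and each column contributes them in the
  order i+1, i. Hence the ball in cell (i+1, c) is an unmatched letter iff the cell (i, c) is empty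
  and all partial sums, over the columns c+1, ..., d, of the column weights
  [ball in row i+1] - [ball in row i] are nonnegative. After rotation the same rule, with the row
  weights [ball in column j+1] - [ball in column j] summed over the rows below the ball,
  describes the balls that e_left j moves.

  e_left j changes the column weights seen by e_down i only in the columns j and j+1; it keeps
  their sum and, when this sum is nonnegative, the sign of the weight of column j. Such a change
  does not affect the tail-sum condition of any other column, and symmetrically for e_down i.
  So outside the 2x2 block formed by the rows i, i+1 and the columns j, j+1 each operator moves the
  same balls before and after the other one, and inside the block both orders of application are
  given by one finite rule, checked by cases.
\<close>

section \<open>Bracket matching and prefix sums\<close>

(* A leading "(" matches one of the unmatched ")" of w; if there is none, 0 - 1 = 0. *)
fun unmatched_closes :: "nat \<Rightarrow> nat list \<Rightarrow> nat" where
  "unmatched_closes i [] = 0"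
| "unmatched_closes i (x # w) =
     (if x = i + 1 then unmatched_closes i w - 1
      else if x = i then Suc (unmatched_closes i w)
      else unmatched_closes i w)"

lemma par_scan_stack_eq:
  "par_scan i w k st = par_scan i w k [] @ drop (unmatched_closes i w) st"
proof (induction w arbitrary: k st)
  case (Cons x w)
  show ?case
  proof (cases "x = i + 1")
    case True
    then show ?thesis using Cons.IH[of "Suc k" "k # st"] Cons.IH[of "Suc k" "[k]"]
      by (cases "unmatched_closes i w") auto
  next
    case False
    then show ?thesis using Cons.IH[of "Suc k" "tl st"] Cons.IH[of "Suc k" st] Cons.IH[of "Suc k" "[]"]
      by (auto simp: drop_Suc)
  qed
qed simp

lemma set_par_scan:
  "set (par_scan i w k []) =
     (\<lambda>p. k + p) ` {p. p < length w \<and> w ! p = i + 1 \<and> unmatched_closes i (drop (Suc p) w) = 0}"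
proof (induction w arbitrary: k)
  case (Cons x w)
  have split_first: "(\<lambda>p. k + p) ` {p. P p} =
      (if P 0 then {k} else {}) \<union> (\<lambda>p. Suc k + p) ` {p. P (Suc p)}" for P
    by (auto simp: image_iff) (metis not0_implies_Suc)+
  have "(\<lambda>p. k + p) ` {p. p < length (x # w) \<and> (x # w) ! p = i + 1
          \<and> unmatched_closes i (drop (Suc p) (x # w)) = 0}
      = (if x = i + 1 \<and> unmatched_closes i w = 0 then {k} else {}) \<union>
        (\<lambda>p. Suc k + p) ` {p. p < length w \<and> w ! p = i + 1
          \<and> unmatched_closes i (drop (Suc p) w) = 0}"
    by (subst split_first) simp
  then show ?case
    using Cons.IH[of "Suc k"] par_scan_stack_eq[of i w "Suc k" "[k]"]
    by (cases "unmatched_closes i w") auto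
qed simp

lemma mem_unmatched_open_iff:
  "p \<in> unmatched_open i w \<longleftrightarrow>
     p < length w \<and> w ! p = i + 1 \<and> unmatched_closes i (drop (Suc p) w) = 0"
  by (simp add: unmatched_open_def set_par_scan)

definition bracket_weight :: "nat \<Rightarrow> nat \<Rightarrow> int" where
  "bracket_weight i x = (if x = i + 1 then 1 else if x = i then -1 else 0)"

fun prefix_sums_nonneg :: "('a \<Rightarrow> int) \<Rightarrow> int \<Rightarrow> 'a list \<Rightarrow> bool" where
  "prefix_sums_nonneg f m [] \<longleftrightarrow> 0 \<le> m"
| "prefix_sums_nonneg f m (x # w) \<longleftrightarrow> 0 \<le> m \<and> prefix_sums_nonneg f (m + f x) w"

lemma prefix_sums_nonneg_imp_nonneg: "prefix_sums_nonneg f m w \<Longrightarrow> 0 \<le> m"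
  by (cases w) auto

lemma prefix_sums_nonneg_append:
  "prefix_sums_nonneg f m (u @ w) \<longleftrightarrow>
     prefix_sums_nonneg f m u \<and> prefix_sums_nonneg f (m + sum_list (map f u)) w"
  by (induction u arbitrary: m) (auto simp: prefix_sums_nonneg_imp_nonneg algebra_simps)

lemma prefix_sums_nonneg_weightless:
  "\<forall>x\<in>set w. f x = 0 \<Longrightarrow> prefix_sums_nonneg f m w \<longleftrightarrow> 0 \<le> m"
  by (induction w arbitrary: m) auto

lemma prefix_sums_nonneg_map:
  "prefix_sums_nonneg f m (map g w) \<longleftrightarrow> prefix_sums_nonneg (f \<circ> g) m w"
  by (induction w arbitrary: m) auto

lemma sum_list_weightless: "\<forall>x\<in>set w. f x = 0 \<Longrightarrow> sum_list (map f w) = 0"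
  by (induction w) auto

lemma unmatched_closes_le_iff:
  "unmatched_closes i w \<le> m \<longleftrightarrow> prefix_sums_nonneg (bracket_weight i) (int m) w"
proof (induction w arbitrary: m)
  case (Cons x w)
  consider "x = i + 1" | "x = i" | "x \<noteq> i + 1" "x \<noteq> i" by blast
  then show ?case
  proof cases
    case 1
    then show ?thesis using Cons.IH[of "Suc m"] by (simp add: bracket_weight_def add.commute le_diff_conv)
  next
    case 2
    then show ?thesis
      using Cons.IH[of "m - 1"] prefix_sums_nonneg_imp_nonneg[of _ "-1" w]
      by (cases m) (auto simp: bracket_weight_def)
  next
    case 3
    then show ?thesis using Cons.IH[of m] by (simp add: bracket_weight_def)
  qed
qed simp

section \<open>Tail sums of integer sequences\<close>

definition tail_sums_nonneg :: "(nat \<Rightarrow> int) \<Rightarrow> int \<Rightarrow> nat \<Rightarrow> nat \<Rightarrow> bool" where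
  "tail_sums_nonneg v x c N \<longleftrightarrow> (\<forall>d. c < d \<and> d \<le> N \<longrightarrow> 0 \<le> x + (\<Sum>k\<in>{c<..d}. v k))"

lemma tail_sums_nonneg_vacuous [simp]: "N \<le> c \<Longrightarrow> tail_sums_nonneg v x c N"
  by (simp add: tail_sums_nonneg_def)

lemma tail_sums_nonneg_Suc_self: "tail_sums_nonneg v x c (Suc c) \<longleftrightarrow> 0 \<le> x + v (Suc c)"
proof -
  have "c < d \<and> d \<le> Suc c \<longleftrightarrow> d = Suc c" for d by auto
  then show ?thesis by (simp add: tail_sums_nonneg_def flip: atLeastSucAtMost_greaterThanAtMost)
qed

lemma tail_sums_nonneg_mono: "x \<le> y \<Longrightarrow> tail_sums_nonneg v x c N \<Longrightarrow> tail_sums_nonneg v y c N"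
  unfolding tail_sums_nonneg_def by force

lemma tail_sums_nonneg_cong:
  "(\<And>k. c < k \<Longrightarrow> k \<le> N \<Longrightarrow> v' k = v k) \<Longrightarrow> tail_sums_nonneg v' x c N \<longleftrightarrow> tail_sums_nonneg v x c N"
  unfolding tail_sums_nonneg_def by (auto intro!: sum.cong)

lemma sum_greaterThanAtMost_split:
  fixes v :: "nat \<Rightarrow> 'a::comm_monoid_add"
  assumes "c \<le> J" "J \<le> d"
  shows "(\<Sum>k\<in>{c<..d}. v k) = (\<Sum>k\<in>{c<..J}. v k) + (\<Sum>k\<in>{J<..d}. v k)"
proof -
  have "{c<..d} = {c<..J} \<union> {J<..d}" using assms by auto
  then show ?thesis by (simp add: sum.union_disjoint)
qed

lemma tail_sums_nonneg_trans:
  assumes "c \<le> J" "J \<le> N"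
  shows "tail_sums_nonneg v x c N \<longleftrightarrow>
    tail_sums_nonneg v x c J \<and> tail_sums_nonneg v (x + (\<Sum>k\<in>{c<..J}. v k)) J N"
    (is "?all \<longleftrightarrow> ?below \<and> ?above")
proof -
  have split: "x + (\<Sum>k\<in>{c<..d}. v k) = (x + (\<Sum>k\<in>{c<..J}. v k)) + (\<Sum>k\<in>{J<..d}. v k)"
    if "J \<le> d" for d
    using sum_greaterThanAtMost_split[OF assms(1) that] by simp
  show ?thesis
  proof (intro iffI conjI)
    assume all: ?all
    show ?below
      using all assms(2) by (simp add: tail_sums_nonneg_def)
    show ?above
      unfolding tail_sums_nonneg_def
    proof (intro allI impI)
      fix d assume d: "J < d \<and> d \<le> N"
      then have "0 \<le> x + (\<Sum>k\<in>{c<..d}. v k)"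
        using all assms(1) by (simp add: tail_sums_nonneg_def)
      then show "0 \<le> x + (\<Sum>k\<in>{c<..J}. v k) + (\<Sum>k\<in>{J<..d}. v k)"
        using d split[of d] by simp
    qed
  next
    assume below_above: "?below \<and> ?above"
    show ?all
      unfolding tail_sums_nonneg_def
    proof (intro allI impI)
      fix d assume d: "c < d \<and> d \<le> N"
      show "0 \<le> x + (\<Sum>k\<in>{c<..d}. v k)"
      proof (cases "d \<le> J")
        case True
        then show ?thesis using below_above d by (simp add: tail_sums_nonneg_def)
      next
        case False
        then have "0 \<le> x + (\<Sum>k\<in>{c<..J}. v k) + (\<Sum>k\<in>{J<..d}. v k)"
          using below_above d by (simp add: tail_sums_nonneg_def)
        with False split[of d] show ?thesis by linarith
      qed
    qed
  qed
qed

lemma tail_sums_nonneg_step: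
  assumes "c < N"
  shows "tail_sums_nonneg v x c N \<longleftrightarrow>
     0 \<le> x + v (Suc c) \<and> tail_sums_nonneg v (x + v (Suc c)) (Suc c) N"
proof -
  have "tail_sums_nonneg v x c N \<longleftrightarrow>
      tail_sums_nonneg v x c (Suc c) \<and> tail_sums_nonneg v (x + (\<Sum>k\<in>{c<..Suc c}. v k)) (Suc c) N"
    by (rule tail_sums_nonneg_trans) (use assms in auto)
  moreover have "(\<Sum>k\<in>{c<..Suc c}. v k) = v (Suc c)"
    by (simp flip: atLeastSucAtMost_greaterThanAtMost)
  ultimately show ?thesis
    by (simp only: tail_sums_nonneg_Suc_self)
qed

lemma tail_sums_nonneg_imp_nonneg_sum:
  assumes "tail_sums_nonneg v x c N" "0 \<le> x" "c \<le> N"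
  shows "0 \<le> x + (\<Sum>k\<in>{c<..N}. v k)"
  using assms by (cases "c = N") (auto simp: tail_sums_nonneg_def)

lemma tail_sums_nonneg_local_change:
  fixes v v' :: "nat \<Rightarrow> int"
  assumes "Suc J \<le> N"
    and same_outside: "\<And>k. k \<noteq> J \<Longrightarrow> k \<noteq> Suc J \<Longrightarrow> v' k = v k"
    and same_pair_sum: "v' J + v' (Suc J) = v J + v (Suc J)"
    and lower_bound: "-1 \<le> v J" "-1 \<le> v' J"
    and same_sign: "0 \<le> v J + v (Suc J) \<Longrightarrow> 0 \<le> v' J \<longleftrightarrow> 0 \<le> v J"
    and "0 \<le> x" "c \<noteq> J" "c \<noteq> Suc J"
  shows "tail_sums_nonneg v' x c N \<longleftrightarrow> tail_sums_nonneg v x c N"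
proof (cases "c < J")
  case False
  with \<open>c \<noteq> J\<close> \<open>c \<noteq> Suc J\<close> show ?thesis
    by (intro tail_sums_nonneg_cong same_outside) auto
next
  case True
  then obtain J0 where J0: "J = Suc J0" "c \<le> J0"
    by (cases J) auto
  define s where "s = x + (\<Sum>k\<in>{c<..J0}. v k)"
  have "(\<Sum>k\<in>{c<..J0}. v' k) = (\<Sum>k\<in>{c<..J0}. v k)"
    using J0 by (intro sum.cong same_outside) auto
  then have unfold: "tail_sums_nonneg w x c N \<longleftrightarrow> tail_sums_nonneg w x c J0 \<and>
      0 \<le> s + w J \<and> 0 \<le> s + w J + w (Suc J) \<and>
      tail_sums_nonneg w (s + w J + w (Suc J)) (Suc J) N"
    if "w = v \<or> w = v'" for w
    using that J0 \<open>Suc J \<le> N\<close> tail_sums_nonneg_trans[of c J0 N w x]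
      tail_sums_nonneg_step[of J0 N w] tail_sums_nonneg_step[of J N w]
    by (auto simp: s_def add.assoc)
  have below: "tail_sums_nonneg v' x c J0 \<longleftrightarrow> tail_sums_nonneg v x c J0"
    using J0 by (intro tail_sums_nonneg_cong same_outside) auto
  have above: "tail_sums_nonneg v' y (Suc J) N \<longleftrightarrow> tail_sums_nonneg v y (Suc J) N" for y
    by (intro tail_sums_nonneg_cong same_outside) auto
  \<comment> \<open>for s > 0 the first inequalities hold anyway, since both weights at J are at least -1\<close>
  have pair: "(0 \<le> s + v' J \<and> 0 \<le> s + v' J + v' (Suc J)) \<longleftrightarrow>
      (0 \<le> s + v J \<and> 0 \<le> s + v J + v (Suc J))" if "0 \<le> s"
    using that same_pair_sum lower_bound same_sign by (cases "s = 0") auto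
  have "tail_sums_nonneg v x c J0 \<Longrightarrow> 0 \<le> s"
    using tail_sums_nonneg_imp_nonneg_sum \<open>0 \<le> x\<close> J0 by (simp add: s_def)
  then show ?thesis
    using unfold[of v] unfold[of v'] below above pair same_pair_sum by (auto simp: add.assoc)
qed

section \<open>The column word\<close>

definition column_cells :: "nat \<Rightarrow> (nat \<times> nat) set \<Rightarrow> nat \<Rightarrow> (nat \<times> nat) list" where
  "column_cells L B c = filter (\<lambda>x. x \<in> B) (map (\<lambda>r. (r, c)) (rev [1..<L+1]))"

lemma cw_eq_concat_column_cells: "cw L n B = concat (map (column_cells L B) [1..<n+1])"
  unfolding cw_def column_cells_def ..

lemma distinct_cw: "distinct (cw L n B)"
proof -
  have "distinct (concat (map (column_cells L B) cs))" if "distinct cs" for cs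
    using that
  proof (induction cs)
    case (Cons c cs)
    have "distinct (column_cells L B c)"
      by (auto intro!: distinct_filter simp: column_cells_def distinct_map inj_on_def)
    moreover have "set (column_cells L B c) \<inter> set (concat (map (column_cells L B) cs)) = {}"
      using Cons.prems by (auto simp: column_cells_def)
    ultimately show ?case using Cons by simp
  qed simp
  then show ?thesis unfolding cw_eq_concat_column_cells by simp
qed

lemma mem_set_cw_iff: "(r, c) \<in> set (cw L n B) \<longleftrightarrow> (r, c) \<in> B \<and> 1 \<le> r \<and> r \<le> L \<and> 1 \<le> c \<and> c \<le> n"
  unfolding cw_eq_concat_column_cells column_cells_def by (auto simp: image_iff)

definition col_weight :: "nat \<Rightarrow> (nat \<times> nat) set \<Rightarrow> nat \<Rightarrow> int" where
  "col_weight i B c = of_bool ((i + 1, c) \<in> B) - of_bool ((i, c) \<in> B)"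

lemma col_weight_ge: "-1 \<le> col_weight i B c"
  by (simp add: col_weight_def)

definition cell_weight :: "nat \<Rightarrow> nat \<times> nat \<Rightarrow> int" where
  "cell_weight i x = bracket_weight i (fst x)"

lemma column_cells_decomp:
  assumes "1 \<le> i" "i < L"
  obtains T R where
    "column_cells L B c = T @ filter (\<lambda>x. x \<in> B) [(i + 1, c), (i, c)] @ R"
    "\<forall>x\<in>set T. cell_weight i x = 0" "\<forall>x\<in>set R. cell_weight i x = 0"
proof -
  have "[1..<L+1] = [1..<i] @ [i..<L+1]"
    using upt_add_eq_append[of 1 i "L + 1 - i"] assms by simp
  also have "[i..<L+1] = i # (i + 1) # [i+2..<L+1]"
    using assms by (simp add: upt_conv_Cons)
  finally have "[1..<L+1] = [1..<i] @ i # (i + 1) # [i+2..<L+1]" .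
  then show ?thesis
    by (intro that[of "filter (\<lambda>x. x \<in> B) (map (\<lambda>r. (r, c)) (rev [i+2..<L+1]))"
          "filter (\<lambda>x. x \<in> B) (map (\<lambda>r. (r, c)) (rev [1..<i]))"])
      (auto simp: column_cells_def cell_weight_def bracket_weight_def)
qed

lemma prefix_sums_nonneg_column:
  assumes "1 \<le> i" "i < L"
  shows "prefix_sums_nonneg (cell_weight i) m (column_cells L B c) \<longleftrightarrow>
      0 \<le> m \<and> 0 \<le> m + col_weight i B c"
proof -
  obtain T R where col: "column_cells L B c = T @ filter (\<lambda>x. x \<in> B) [(i + 1, c), (i, c)] @ R"
    and T: "\<forall>x\<in>set T. cell_weight i x = 0" and R: "\<forall>x\<in>set R. cell_weight i x = 0"
    using column_cells_decomp[OF assms] .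
  show ?thesis
    unfolding col prefix_sums_nonneg_append
    by (auto simp: prefix_sums_nonneg_weightless[OF T] prefix_sums_nonneg_weightless[OF R]
        sum_list_weightless[OF T] col_weight_def cell_weight_def bracket_weight_def)
qed

lemma sum_list_column:
  assumes "1 \<le> i" "i < L"
  shows "sum_list (map (cell_weight i) (column_cells L B c)) = col_weight i B c"
proof -
  obtain T R where col: "column_cells L B c = T @ filter (\<lambda>x. x \<in> B) [(i + 1, c), (i, c)] @ R"
    and T: "\<forall>x\<in>set T. cell_weight i x = 0" and R: "\<forall>x\<in>set R. cell_weight i x = 0"
    using column_cells_decomp[OF assms] .
  show ?thesis
    unfolding col by (simp add: sum_list_weightless[OF T] sum_list_weightless[OF R]
        col_weight_def cell_weight_def bracket_weight_def)
qed

lemma sum_list_columns: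
  assumes "1 \<le> i" "i < L"
  shows "sum_list (map (cell_weight i) (concat (map (column_cells L B) [Suc c..<Suc N])))
    = (\<Sum>k\<in>{c<..N}. col_weight i B k)"
proof -
  have "sum_list (map (cell_weight i) (concat (map (column_cells L B) cs)))
      = sum_list (map (col_weight i B) cs)" for cs
    by (induction cs) (simp_all add: sum_list_column[OF assms])
  moreover have "{c<..N} = set [Suc c..<Suc N]" by auto
  ultimately show ?thesis by (simp only: sum_set_upt_conv_sum_list_nat)
qed

lemma prefix_sums_nonneg_columns:
  assumes "1 \<le> i" "i < L"
  shows "prefix_sums_nonneg (cell_weight i) m (concat (map (column_cells L B) [Suc c..<Suc N]))
    \<longleftrightarrow> 0 \<le> m \<and> tail_sums_nonneg (col_weight i B) m c N"
proof (induction N)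
  case (Suc N)
  show ?case
  proof (cases "c \<le> N")
    case True
    let ?S = "\<Sum>k\<in>{c<..N}. col_weight i B k"
    have split: "concat (map (column_cells L B) [Suc c..<Suc (Suc N)]) =
        concat (map (column_cells L B) [Suc c..<Suc N]) @ column_cells L B (Suc N)"
      using True by simp
    have "prefix_sums_nonneg (cell_weight i) m (concat (map (column_cells L B) [Suc c..<Suc (Suc N)]))
        \<longleftrightarrow> (0 \<le> m \<and> tail_sums_nonneg (col_weight i B) m c N) \<and>
          0 \<le> m + ?S \<and> 0 \<le> m + ?S + col_weight i B (Suc N)"
      unfolding split prefix_sums_nonneg_append Suc.IH sum_list_columns[OF assms]
        prefix_sums_nonneg_column[OF assms] by simp
    moreover have "tail_sums_nonneg (col_weight i B) m c (Suc N) \<longleftrightarrow>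
        tail_sums_nonneg (col_weight i B) m c N \<and> 0 \<le> m + ?S + col_weight i B (Suc N)"
      using tail_sums_nonneg_trans[of c N "Suc N"] True by (simp add: tail_sums_nonneg_Suc_self)
    ultimately show ?thesis
      using tail_sums_nonneg_imp_nonneg_sum[of "col_weight i B" m c N] True by blast
  qed simp
qed simp

definition moves_down :: "nat \<Rightarrow> nat \<Rightarrow> (nat \<times> nat) set \<Rightarrow> nat \<Rightarrow> bool" where
  "moves_down n i B c \<longleftrightarrow> 1 \<le> c \<and> c \<le> n \<and> (i + 1, c) \<in> B \<and> (i, c) \<notin> B \<and>
     tail_sums_nonneg (col_weight i B) 0 c n"

lemma prefix_sums_nonneg_after_ball:
  assumes i: "1 \<le> i" "i < L" and c: "1 \<le> c" "c \<le> n" "(i + 1, c) \<in> B"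
    and p: "p < length (cw L n B)" "cw L n B ! p = (i + 1, c)"
  shows "prefix_sums_nonneg (cell_weight i) 0 (drop (Suc p) (cw L n B)) \<longleftrightarrow>
    (i, c) \<notin> B \<and> tail_sums_nonneg (col_weight i B) 0 c n"
proof -
  obtain T R where col: "column_cells L B c = T @ filter (\<lambda>x. x \<in> B) [(i + 1, c), (i, c)] @ R"
    and R: "\<forall>x\<in>set R. cell_weight i x = 0"
    using column_cells_decomp[OF i] by metis
  define Z where "Z = concat (map (column_cells L B) [Suc c..<Suc n])"
  define S where "S = filter (\<lambda>x. x \<in> B) [(i, c)] @ R @ Z"
  have "[1..<n+1] = [1..<c] @ [c..<n+1]"
    using upt_add_eq_append[of 1 c "n + 1 - c"] c by simp
  also have "[c..<n+1] = c # [Suc c..<Suc n]"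
    using c by (simp add: upt_conv_Cons)
  finally have cols: "[1..<n+1] = [1..<c] @ c # [Suc c..<Suc n]" .
  have cw: "cw L n B = (concat (map (column_cells L B) [1..<c]) @ T) @ (i + 1, c) # S"
    unfolding cw_eq_concat_column_cells cols using c(3) by (simp add: col S_def Z_def)
  have drop: "drop (Suc p) (cw L n B) = S"
    using cw p distinct_cw[of L n B]
      nth_eq_iff_index_eq[of "cw L n B" p "length (concat (map (column_cells L B) [1..<c]) @ T)"]
    by (simp add: nth_append)
  have "prefix_sums_nonneg (cell_weight i) m Z \<longleftrightarrow>
      0 \<le> m \<and> tail_sums_nonneg (col_weight i B) m c n" for m
    unfolding Z_def by (rule prefix_sums_nonneg_columns[OF i])
  then have "prefix_sums_nonneg (cell_weight i) 0 S \<longleftrightarrow>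
      (i, c) \<notin> B \<and> tail_sums_nonneg (col_weight i B) 0 c n"
    unfolding S_def prefix_sums_nonneg_append
    by (simp add: prefix_sums_nonneg_weightless[OF R] sum_list_weightless[OF R]
        cell_weight_def bracket_weight_def)
  with drop show ?thesis by simp
qed

lemma mem_unmatched_open_cw_iff:
  "p \<in> unmatched_open i (map fst (cw L n B)) \<longleftrightarrow>
    p < length (cw L n B) \<and> fst (cw L n B ! p) = i + 1 \<and>
    prefix_sums_nonneg (cell_weight i) 0 (drop (Suc p) (cw L n B))"
proof -
  have "cell_weight i = bracket_weight i \<circ> fst" by (auto simp: cell_weight_def)
  then show ?thesis
    using unmatched_closes_le_iff[of i _ 0]
    by (auto simp: mem_unmatched_open_iff prefix_sums_nonneg_map drop_map)
qed

lemma e_star_eq: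
  assumes i: "1 \<le> i" "i < L"
  shows "e_star L n i B = B - {(i + 1, c) | c. moves_down n i B c} \<union> {(i, c) | c. moves_down n i B c}"
proof -
  define ws where "ws = cw L n B"
  define U where "U = (\<lambda>k. ws ! k) ` unmatched_open i (map fst ws)"
  have "U = {(i + 1, c) | c. moves_down n i B c}"
  proof (intro set_eqI iffI)
    fix x assume "x \<in> U"
    then obtain p where "p \<in> unmatched_open i (map fst ws)" and x: "x = ws ! p"
      unfolding U_def by blast
    then have p: "p < length ws" "fst (ws ! p) = i + 1"
      and suffix: "prefix_sums_nonneg (cell_weight i) 0 (drop (Suc p) ws)"
      unfolding ws_def mem_unmatched_open_cw_iff by auto
    then obtain c where "ws ! p = (i + 1, c)" by (cases "ws ! p") auto
    with x p have p: "p < length ws" "ws ! p = (i + 1, c)" "x = (i + 1, c)" by auto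
    then have "(i + 1, c) \<in> set ws" by (metis nth_mem)
    then have "1 \<le> c" "c \<le> n" "(i + 1, c) \<in> B" unfolding ws_def mem_set_cw_iff by auto
    with prefix_sums_nonneg_after_ball[OF i this] p suffix show "x \<in> {(i + 1, c) | c. moves_down n i B c}"
      unfolding ws_def moves_down_def by auto
  next
    fix x assume "x \<in> {(i + 1, c) | c. moves_down n i B c}"
    then obtain c where x: "x = (i + 1, c)" and mv: "moves_down n i B c" by auto
    have "(i + 1, c) \<in> set ws" using mv i unfolding ws_def mem_set_cw_iff moves_down_def by auto
    then obtain p where p: "p < length ws" "ws ! p = x" using x by (auto simp: in_set_conv_nth)
    then have "p \<in> unmatched_open i (map fst ws)"
      using prefix_sums_nonneg_after_ball[OF i, of c n B p] mv x
      unfolding ws_def mem_unmatched_open_cw_iff moves_down_def by auto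
    with p show "x \<in> U" unfolding U_def by blast
  qed
  then show ?thesis
    unfolding e_star_def U_def ws_def Let_def by auto
qed

lemma mem_e_down_iff:
  assumes "1 \<le> i" "i < L"
  shows "(a, b) \<in> e_down L n i X \<longleftrightarrow>
    (a, b) \<in> X \<and> \<not> (a = i + 1 \<and> moves_down n i X b) \<or> a = i \<and> moves_down n i X b"
  unfolding e_down_def e_star_eq[OF assms] by auto

lemma e_down_subset_rows:
  assumes "1 \<le> i" "i < L" "X \<subseteq> {1..L} \<times> UNIV"
  shows "e_down L n i X \<subseteq> {1..L} \<times> UNIV"
  using assms unfolding e_down_def e_star_eq[OF assms(1,2)] by auto

lemma mem_rot_iff:
  "X \<subseteq> {1..L} \<times> UNIV \<Longrightarrow> (a, b) \<in> rot L X \<longleftrightarrow> 1 \<le> b \<and> b \<le> L \<and> (L + 1 - b, a) \<in> X"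
  unfolding rot_def by (force simp: image_iff)

lemma mem_rot_inv_iff:
  "Y \<subseteq> UNIV \<times> {1..L} \<Longrightarrow> (a, b) \<in> rot_inv L Y \<longleftrightarrow> 1 \<le> a \<and> a \<le> L \<and> (b, L + 1 - a) \<in> Y"
  unfolding rot_inv_def by (force simp: image_iff)

definition moves_left :: "nat \<Rightarrow> nat \<Rightarrow> (nat \<times> nat) set \<Rightarrow> nat \<Rightarrow> bool" where
  "moves_left L j X a \<longleftrightarrow> 1 \<le> a \<and> a \<le> L \<and> moves_down L j (rot L X) (L + 1 - a)"

lemma mem_e_left_iff:
  assumes X: "X \<subseteq> {1..L} \<times> UNIV" and j: "1 \<le> j" "j < n"
  shows "(a, b) \<in> e_left L n j X \<longleftrightarrow>
    (a, b) \<in> X \<and> \<not> (b = j + 1 \<and> moves_left L j X a) \<or> b = j \<and> moves_left L j X a"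
proof -
  define R where "R = rot L X"
  have R: "R \<subseteq> UNIV \<times> {1..L}" using X unfolding R_def rot_def by fastforce
  have E: "e_star n L j R = R - {(j + 1, c) | c. moves_down L j R c} \<union> {(j, c) | c. moves_down L j R c}"
    using e_star_eq j by blast
  then have "e_star n L j R \<subseteq> UNIV \<times> {1..L}" using R by (auto simp: moves_down_def)
  then have "(a, b) \<in> e_left L n j X \<longleftrightarrow> 1 \<le> a \<and> a \<le> L \<and> (b, L + 1 - a) \<in> e_star n L j R"
    unfolding e_left_def R_def[symmetric] by (rule mem_rot_inv_iff)
  also have "\<dots> \<longleftrightarrow> (a, b) \<in> X \<and> \<not> (b = j + 1 \<and> moves_left L j X a) \<or> b = j \<and> moves_left L j X a"
  proof (cases "1 \<le> a \<and> a \<le> L")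
    case True
    moreover have "(b, L + 1 - a) \<in> R \<longleftrightarrow> (a, b) \<in> X"
      using True mem_rot_iff[OF X] unfolding R_def by auto
    moreover have "moves_left L j X a \<longleftrightarrow> moves_down L j R (L + 1 - a)"
      using True by (simp add: moves_left_def R_def)
    ultimately show ?thesis unfolding E by auto
  qed (use X in \<open>auto simp: moves_left_def\<close>)
  finally show ?thesis .
qed

lemma col_weight_rot:
  assumes "X \<subseteq> {1..L} \<times> UNIV"
  shows "col_weight j (rot L X) k =
    (if 1 \<le> k \<and> k \<le> L then of_bool ((L + 1 - k, j + 1) \<in> X) - of_bool ((L + 1 - k, j) \<in> X) else 0)"
  using mem_rot_iff[OF assms] by (auto simp: col_weight_def)

lemma moves_left_iff:
  assumes "X \<subseteq> {1..L} \<times> UNIV" "1 \<le> a" "a \<le> L"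
  shows "moves_left L j X a \<longleftrightarrow> (a, j + 1) \<in> X \<and> (a, j) \<notin> X \<and>
    tail_sums_nonneg (col_weight j (rot L X)) 0 (L + 1 - a) L"
  using assms mem_rot_iff[OF assms(1), of _ "L + 1 - a"] by (auto simp: moves_left_def moves_down_def)

section \<open>The 2x2 block\<close>

text \<open>
  The argument G of
  down_block is the tail-sum condition of the columns beyond j+1, started from the given value;
  H plays the same role for the rows below i in left_block.
\<close>

type_synonym block = "bool \<times> bool \<times> bool \<times> bool"

definition block_at :: "nat \<Rightarrow> nat \<Rightarrow> (nat \<times> nat) set \<Rightarrow> block" where
  "block_at i j X = ((i + 1, j) \<in> X, (i + 1, j + 1) \<in> X, (i, j) \<in> X, (i, j + 1) \<in> X)"

definition down_block :: "(int \<Rightarrow> bool) \<Rightarrow> block \<Rightarrow> block" where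
  "down_block G = (\<lambda>(p, q, s, t).
     let w = of_bool q - of_bool t :: int;
         m = p \<and> \<not> s \<and> 0 \<le> w \<and> G w;
         m' = q \<and> \<not> t \<and> G 0
     in (p \<and> \<not> m, q \<and> \<not> m', s \<or> m, t \<or> m'))"

definition left_block :: "(int \<Rightarrow> bool) \<Rightarrow> block \<Rightarrow> block" where
  "left_block H = (\<lambda>(p, q, s, t).
     let w = of_bool t - of_bool s :: int;
         m = q \<and> \<not> p \<and> 0 \<le> w \<and> H w;
         m' = t \<and> \<not> s \<and> H 0
     in (p \<or> m, q \<and> \<not> m, s \<or> m', t \<and> \<not> m'))"

lemma down_left_block_commute:
  assumes "G 0 \<Longrightarrow> G 1" "H 0 \<Longrightarrow> H 1"
  shows "down_block G (left_block H b) = left_block H (down_block G b)"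
  using assms by (cases b) (auto simp: down_block_def left_block_def Let_def)

lemma left_block_col_weights:
  fixes p q s t :: bool
  assumes "H 0 \<Longrightarrow> H 1" "left_block H (p, q, s, t) = (p', q', s', t')"
  shows "(of_bool p' - of_bool s') + (of_bool q' - of_bool t') =
      (of_bool p - of_bool s) + (of_bool q - of_bool t :: int)"
    and "0 \<le> (of_bool p - of_bool s) + (of_bool q - of_bool t :: int) \<Longrightarrow>
      0 \<le> (of_bool p' - of_bool s' :: int) \<longleftrightarrow> 0 \<le> (of_bool p - of_bool s :: int)"
  using assms by (auto simp: left_block_def Let_def)

lemma down_block_row_weights:
  fixes p q s t :: bool
  assumes "G 0 \<Longrightarrow> G 1" "down_block G (p, q, s, t) = (p', q', s', t')"
  shows "(of_bool q' - of_bool p') + (of_bool t' - of_bool s') =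
      (of_bool q - of_bool p) + (of_bool t - of_bool s :: int)"
    and "0 \<le> (of_bool q - of_bool p) + (of_bool t - of_bool s :: int) \<Longrightarrow>
      0 \<le> (of_bool q' - of_bool p' :: int) \<longleftrightarrow> 0 \<le> (of_bool q - of_bool p :: int)"
  using assms by (auto simp: down_block_def Let_def)

lemma block_e_down:
  assumes i: "1 \<le> i" "i < L" and j: "1 \<le> j" "j < n"
  shows "block_at i j (e_down L n i X) =
    down_block (\<lambda>x. tail_sums_nonneg (col_weight i X) x (Suc j) n) (block_at i j X)"
proof -
  have "moves_down n i X j \<longleftrightarrow> (i + 1, j) \<in> X \<and> (i, j) \<notin> X \<and>
      0 \<le> col_weight i X (Suc j) \<and>
      tail_sums_nonneg (col_weight i X) (col_weight i X (Suc j)) (Suc j) n"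
    using j tail_sums_nonneg_step[of j n "col_weight i X" 0] by (auto simp: moves_down_def)
  moreover have "moves_down n i X (Suc j) \<longleftrightarrow>
      (i + 1, Suc j) \<in> X \<and> (i, Suc j) \<notin> X \<and> tail_sums_nonneg (col_weight i X) 0 (Suc j) n"
    using j by (auto simp: moves_down_def)
  ultimately show ?thesis
    unfolding block_at_def down_block_def mem_e_down_iff[OF i] Let_def by (auto simp: col_weight_def)
qed

lemma block_e_left:
  assumes X: "X \<subseteq> {1..L} \<times> UNIV" and i: "1 \<le> i" "i < L" and j: "1 \<le> j" "j < n"
  shows "block_at i j (e_left L n j X) =
    left_block (\<lambda>x. tail_sums_nonneg (col_weight j (rot L X)) x (L + 1 - i) L) (block_at i j X)"
proof -
  let ?w = "col_weight j (rot L X) (L + 1 - i)"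
  have w: "?w = of_bool ((i, j + 1) \<in> X) - of_bool ((i, j) \<in> X)"
    using i by (auto simp: col_weight_rot[OF X] Suc_diff_le)
  have "moves_left L j X (i + 1) \<longleftrightarrow> (i + 1, j + 1) \<in> X \<and> (i + 1, j) \<notin> X \<and>
      0 \<le> ?w \<and> tail_sums_nonneg (col_weight j (rot L X)) ?w (L + 1 - i) L"
    using i moves_left_iff[OF X, of "i + 1"] tail_sums_nonneg_step[of "L - i" L "col_weight j (rot L X)" 0]
    by (simp add: Suc_diff_le)
  moreover have "moves_left L j X i \<longleftrightarrow> (i, j + 1) \<in> X \<and> (i, j) \<notin> X \<and>
      tail_sums_nonneg (col_weight j (rot L X)) 0 (L + 1 - i) L"
    using i moves_left_iff[OF X, of i] by simp
  ultimately show ?thesis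
    unfolding block_at_def left_block_def mem_e_left_iff[OF X j] Let_def w by auto
qed

lemma mem_e_left_other_column:
  assumes "X \<subseteq> {1..L} \<times> UNIV" "1 \<le> j" "j < n" "b \<noteq> j" "b \<noteq> j + 1"
  shows "(a, b) \<in> e_left L n j X \<longleftrightarrow> (a, b) \<in> X"
  using assms by (simp add: mem_e_left_iff)

lemma mem_e_down_other_row:
  assumes "1 \<le> i" "i < L" "a \<noteq> i" "a \<noteq> i + 1"
  shows "(a, b) \<in> e_down L n i X \<longleftrightarrow> (a, b) \<in> X"
  using assms by (simp add: mem_e_down_iff)

lemma moves_down_e_left:
  assumes X: "X \<subseteq> {1..L} \<times> UNIV" and i: "1 \<le> i" "i < L" and j: "1 \<le> j" "j < n"
    and c: "c \<noteq> j" "c \<noteq> j + 1"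
  shows "moves_down n i (e_left L n j X) c \<longleftrightarrow> moves_down n i X c"
proof -
  let ?Y = "e_left L n j X"
  have "left_block (\<lambda>x. tail_sums_nonneg (col_weight j (rot L X)) x (L + 1 - i) L) (block_at i j X)
      = block_at i j ?Y"
    by (rule block_e_left[OF X i j, symmetric])
  from left_block_col_weights[OF tail_sums_nonneg_mono[OF zero_le_one] this[unfolded block_at_def]]
  have "col_weight i ?Y j + col_weight i ?Y (Suc j) = col_weight i X j + col_weight i X (Suc j)"
    and "0 \<le> col_weight i X j + col_weight i X (Suc j) \<Longrightarrow>
      0 \<le> col_weight i ?Y j \<longleftrightarrow> 0 \<le> col_weight i X j"
    by (simp_all add: col_weight_def)
  moreover have "col_weight i ?Y k = col_weight i X k" if "k \<noteq> j" "k \<noteq> Suc j" for k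
    using that mem_e_left_other_column[OF X j] by (simp add: col_weight_def)
  ultimately have "tail_sums_nonneg (col_weight i ?Y) 0 c n \<longleftrightarrow> tail_sums_nonneg (col_weight i X) 0 c n"
    using j c by (intro tail_sums_nonneg_local_change) (auto simp: col_weight_ge)
  then show ?thesis
    using c mem_e_left_other_column[OF X j] by (simp add: moves_down_def)
qed

lemma moves_left_e_down:
  assumes X: "X \<subseteq> {1..L} \<times> UNIV" and i: "1 \<le> i" "i < L" and j: "1 \<le> j" "j < n"
    and a: "a \<noteq> i" "a \<noteq> i + 1"
  shows "moves_left L j (e_down L n i X) a \<longleftrightarrow> moves_left L j X a"
proof (cases "1 \<le> a \<and> a \<le> L")
  case True
  let ?Y = "e_down L n i X"
  have Y: "?Y \<subseteq> {1..L} \<times> UNIV" by (rule e_down_subset_rows[OF i X])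
  have "down_block (\<lambda>x. tail_sums_nonneg (col_weight i X) x (Suc j) n) (block_at i j X) = block_at i j ?Y"
    by (rule block_e_down[OF i j, symmetric])
  note weights = down_block_row_weights[OF tail_sums_nonneg_mono[OF zero_le_one] this[unfolded block_at_def]]
  have rows: "L + 1 - (L - i) = i + 1" "L + 1 - Suc (L - i) = i" "1 \<le> L - i" "Suc (L - i) \<le> L"
    using i by auto
  have block_weights:
    "col_weight j (rot L Z) (L - i) = of_bool ((i + 1, j + 1) \<in> Z) - of_bool ((i + 1, j) \<in> Z)"
    "col_weight j (rot L Z) (Suc (L - i)) = of_bool ((i, j + 1) \<in> Z) - of_bool ((i, j) \<in> Z)"
    if "Z \<subseteq> {1..L} \<times> UNIV" for Z
    using i rows by (simp_all add: col_weight_rot[OF that])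
  have "col_weight j (rot L ?Y) (L - i) + col_weight j (rot L ?Y) (Suc (L - i)) =
      col_weight j (rot L X) (L - i) + col_weight j (rot L X) (Suc (L - i))"
    and "0 \<le> col_weight j (rot L X) (L - i) + col_weight j (rot L X) (Suc (L - i)) \<Longrightarrow>
      0 \<le> col_weight j (rot L ?Y) (L - i) \<longleftrightarrow> 0 \<le> col_weight j (rot L X) (L - i)"
    using weights unfolding block_weights[OF X] block_weights[OF Y] by simp_all
  moreover have "col_weight j (rot L ?Y) k = col_weight j (rot L X) k"
    if "k \<noteq> L - i" "k \<noteq> Suc (L - i)" for k
    using that i mem_e_down_other_row[OF i, of "L + 1 - k"]
    by (auto simp: col_weight_rot[OF X] col_weight_rot[OF Y])
  ultimately have "tail_sums_nonneg (col_weight j (rot L ?Y)) 0 (L + 1 - a) L \<longleftrightarrow>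
      tail_sums_nonneg (col_weight j (rot L X)) 0 (L + 1 - a) L"
    using True a rows by (intro tail_sums_nonneg_local_change) (auto simp: col_weight_ge)
  then show ?thesis
    using True a mem_e_down_other_row[OF i a] by (simp add: moves_left_iff[OF X] moves_left_iff[OF Y])
qed (auto simp: moves_left_def)

lemma block_e_down_e_left:
  assumes X: "X \<subseteq> {1..L} \<times> UNIV" and i: "1 \<le> i" "i < L" and j: "1 \<le> j" "j < n"
  shows "block_at i j (e_down L n i (e_left L n j X)) = block_at i j (e_left L n j (e_down L n i X))"
proof -
  define G where "G v x = tail_sums_nonneg v x (Suc j) n" for v x
  define H where "H v x = tail_sums_nonneg v x (L + 1 - i) L" for v x
  have G_LX: "G (col_weight i (e_left L n j X)) = G (col_weight i X)"
    unfolding G_def using mem_e_left_other_column[OF X j]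
    by (intro ext tail_sums_nonneg_cong) (simp add: col_weight_def)
  have H_DX: "H (col_weight j (rot L (e_down L n i X))) = H (col_weight j (rot L X))"
    unfolding H_def using mem_e_down_other_row[OF i] e_down_subset_rows[OF i X]
    by (intro ext tail_sums_nonneg_cong) (auto simp: col_weight_rot[OF X] col_weight_rot)
  let ?DX = "e_down L n i X" and ?LX = "e_left L n j X"
  have "block_at i j (e_down L n i ?LX) = down_block (G (col_weight i ?LX)) (block_at i j ?LX)"
    unfolding G_def by (rule block_e_down[OF i j])
  also have "\<dots> = down_block (G (col_weight i X)) (left_block (H (col_weight j (rot L X))) (block_at i j X))"
    unfolding G_LX H_def by (simp add: block_e_left[OF X i j])
  also have "\<dots> = left_block (H (col_weight j (rot L X))) (down_block (G (col_weight i X)) (block_at i j X))"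
    unfolding G_def H_def by (intro down_left_block_commute tail_sums_nonneg_mono[OF zero_le_one])
  also have "\<dots> = left_block (H (col_weight j (rot L ?DX))) (block_at i j ?DX)"
    unfolding H_DX G_def by (simp add: block_e_down[OF i j])
  also have "\<dots> = block_at i j (e_left L n j ?DX)"
    unfolding H_def by (rule block_e_left[OF e_down_subset_rows[OF i X] i j, symmetric])
  finally show ?thesis .
qed

theorem lemma5p7:
  fixes L n i j :: nat and B :: "(nat \<times> nat) set"
  assumes "L \<ge> 1" and "n \<ge> 1" and "B \<in> mats L n"
    and "1 \<le> i" and "i \<le> L - 1" and "1 \<le> j" and "j \<le> n - 1"
  shows "e_down L n i (e_left L n j B) = e_left L n j (e_down L n i B)"
proof (rule set_eqI, clarify)
  have B: "B \<subseteq> {1..L} \<times> UNIV" using assms(3) by (auto simp: mats_def)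
  have i: "1 \<le> i" "i < L" and j: "1 \<le> j" "j < n" using assms by auto
  have DB: "e_down L n i B \<subseteq> {1..L} \<times> UNIV" by (rule e_down_subset_rows[OF i B])
  fix a b
  consider "a \<in> {i, i + 1}" "b \<in> {j, j + 1}" | "a \<noteq> i" "a \<noteq> i + 1" | "b \<noteq> j" "b \<noteq> j + 1"
    by blast
  then show "(a, b) \<in> e_down L n i (e_left L n j B) \<longleftrightarrow> (a, b) \<in> e_left L n j (e_down L n i B)"
  proof cases
    case 1
    then show ?thesis using block_e_down_e_left[OF B i j] by (auto simp: block_at_def)
  next
    case 2
    then show ?thesis
      using moves_left_e_down[OF B i j] mem_e_down_other_row[OF i]
      by (simp add: mem_e_left_iff[OF B j] mem_e_left_iff[OF DB j])
  next
    case 3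
    then show ?thesis
      using moves_down_e_left[OF B i j] mem_e_left_other_column[OF B j] mem_e_left_other_column[OF DB j]
      by (simp add: mem_e_down_iff[OF i])
  qed
qed

end
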